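(* Assume that for every integer $d\ge5$ and every real $x\ge\frac12\left(d+\sqrt{d+2}\right)$ one has $-\frac{R_d(x)}{P_d(x)}\ge\frac{0.995(d-2)}{2x+d-2}$. Let $s_1\ge1$ and $s_2$ be integers with $s_2>\frac12\left(\sqrt{8s_1+9}-1\right)$, and let $$d_0=\left\lfloor\sqrt{4s_1^2+4s_1+(s_2+\tfrac12)^2}-s_2-\tfrac32\right\rfloor,$$ and suppose $d_0\ge5$. If $$0<\frac{2}{d_0+1}(s_1^2+s_1)-\frac{d_0+2}{2}-s_2\le\frac{0.995(d_0-2)}{2s_1+d_0-2},$$ then the function $f_{s_1,s_2}(N)=\binom{s_2}{N}\sum_i\binom{s_1}{i}\binom{s_1}{N-i}\binom{N}{i}$ attains its maximum over integers $N$ at $N=\left\lfloor 2s_1+s_2+\tfrac32-\sqrt{4s_1^2+4s_1+(s_2+\tfrac12)^2}\right\rfloor+1$.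
   Context: Binomial coefficients $\binom{a}{b}$ are $0$ when $b<0$ or $b>a$. For a nonnegative integer $d$, $P_d(x)=\sum_{i=0}^{d}\frac{(x_i)^2(x_{d-i})^2}{i!\,(d-i)!}$ with $x_i=x(x-1)\cdots(x-i+1)$, and $R_d(x)=P_{d+1}(x)-\left(\frac{2}{d+1}x^2-\frac{2d}{d+1}x+\frac d2\right)P_d(x)$. The first sentence of the claim (the assumed inequality) is the paper's Conjecture 3.1, taken here as a hypothesis. *)

theory Defs
  imports Complex_Main
begin

definition ibinom :: "int \<Rightarrow> int \<Rightarrow> int" where
  "ibinom a b = (if 0 \<le> b \<and> b \<le> a then int (nat a choose nat b) else 0)"

definition ffall :: "real \<Rightarrow> nat \<Rightarrow> real" where
  "ffall x i = (\<Prod>k<i. x - real k)"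

definition Pd :: "nat \<Rightarrow> real \<Rightarrow> real" where
  "Pd d x = (\<Sum>i=0..d. (ffall x i)^2 * (ffall x (d - i))^2 / (fact i * fact (d - i)))"

definition Rd :: "nat \<Rightarrow> real \<Rightarrow> real" where
  "Rd d x = Pd (d + 1) x
     - (2 / (real d + 1) * x^2 - 2 * real d / (real d + 1) * x + real d / 2) * Pd d x"

text \<open>f_{s1,s2}(N); the sum over all integers i is restricted to 0..s1,
  outside of which binom s1 i vanishes.\<close>
definition fs :: "int \<Rightarrow> int \<Rightarrow> int \<Rightarrow> int" where
  "fs s1 s2 N = ibinom s2 N * (\<Sum>i\<in>{0..s1}. ibinom s1 i * ibinom s1 (N - i) * ibinom N i)"

end

theory Submission
  imports Defs
begin

text \<open>
  Write \<open>n = s\<^sub>1\<close>, \<open>y = s\<^sub>2\<close> and \<open>d = 2n - N\<close>. The inner sum of \<open>f\<close> is \<open>N! P\<^sub>d(n) / (n!)\<^sup>2\<close>,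
  so \<open>f(N - 1) \<le> f(N)\<close> amounts to \<open>P\<^sub>d\<^sub>+\<^sub>1(n) \<le> (y - N + 1) P\<^sub>d(n)\<close>. Writing
  \<open>R\<^sub>d = P\<^sub>d\<^sub>+\<^sub>1 - q\<^sub>d P\<^sub>d\<close>, this is \<open>-R\<^sub>d/P\<^sub>d \<ge> gap\<^sub>d\<close>, where \<open>gap\<^sub>d = q\<^sub>d(n) - (y - N + 1)\<close>
  has the sign of \<open>d\<^sub>* - d\<close> for the positive root \<open>d\<^sub>*\<close> of \<open>(d + 1)(d + 2 + 2y) = 4(n\<^sup>2 + n)\<close>,
  and \<open>d\<^sub>0 = \<lfloor>d\<^sub>*\<rfloor>\<close>. For \<open>d < d\<^sub>0\<close> the averaging bound
  \<open>P\<^sub>d\<^sub>+\<^sub>1 \<ge> (2n - d)\<^sup>2 P\<^sub>d / (2(d + 2))\<close> already beats \<open>y - N + 1\<close>, so \<open>f\<close> decreases there.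
  For \<open>d \<ge> d\<^sub>0\<close> the gap is nonpositive except at \<open>d\<^sub>0\<close>, where it is bounded by hypothesis,
  so the conjecture gives the increase, except for small \<open>N\<close> below the conjecture's range,
  where the crude bound \<open>P\<^sub>d\<^sub>+\<^sub>1 \<le> (N + 1)\<^sup>2 P\<^sub>d / (d + 1)\<close> suffices. Hence \<open>f\<close> is unimodal
  with peak at \<open>N = 2n - d\<^sub>0\<close>.
\<close>

section \<open>Terms of \<open>P\<^sub>d\<close> and the recursion bounds\<close>

definition Pd_term :: "nat \<Rightarrow> real \<Rightarrow> nat \<Rightarrow> real" where
  "Pd_term d x i = (ffall x i)^2 * (ffall x (d - i))^2 / (fact i * fact (d - i))"

lemma Pd_eq_sum_Pd_term: "Pd d x = (\<Sum>i=0..d. Pd_term d x i)"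
  by (simp add: Pd_def Pd_term_def)

lemma Pd_term_nonneg: "0 \<le> Pd_term d x i"
  by (simp add: Pd_term_def)

lemma Pd_nonneg: "0 \<le> Pd d x"
  unfolding Pd_eq_sum_Pd_term by (intro sum_nonneg Pd_term_nonneg)

lemma ffall_Suc: "ffall x (Suc k) = ffall x k * (x - real k)"
  by (simp add: ffall_def)

lemma ffall_of_nat_eq_0: "n < k \<Longrightarrow> ffall (real n) k = 0"
  unfolding ffall_def by (rule prod_zero) auto

lemma ffall_of_nat_pos: "k \<le> n \<Longrightarrow> 0 < ffall (real n) k"
  unfolding ffall_def by (rule prod_pos) auto

lemma ffall_of_nat: "k \<le> n \<Longrightarrow> ffall (real n) k = fact n / fact (n - k)"
proof (induction k)
  case 0
  then show ?case by (simp add: ffall_def)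
next
  case (Suc k)
  then have "fact (n - k) = real (n - k) * (fact (n - Suc k) :: real)"
    by (simp add: fact_reduce)
  with Suc show ?case
    by (simp add: ffall_Suc)
qed

lemma Pd_term_Suc_left:
  assumes "i \<le> d"
  shows "Pd_term (Suc d) x i = Pd_term d x i * (x - real (d - i))^2 / real (Suc d - i)"
  using assms by (simp add: Pd_term_def Suc_diff_le ffall_Suc power_mult_distrib ac_simps)

lemma Pd_term_Suc_right: "Pd_term (Suc d) x (Suc i) = Pd_term d x i * (x - real i)^2 / real (Suc i)"
  by (simp add: Pd_term_def ffall_Suc power_mult_distrib ac_simps)

lemma Pd_pos: "d \<le> 2 * n \<Longrightarrow> 0 < Pd d (real n)"
proof -
  assume "d \<le> 2 * n"
  then have "d div 2 \<le> n" "d - d div 2 \<le> n"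
    by linarith+
  then have "0 < Pd_term d (real n) (d div 2)"
    unfolding Pd_term_def by (intro divide_pos_pos mult_pos_pos zero_less_power ffall_of_nat_pos) simp_all
  also have "\<dots> \<le> Pd d (real n)"
    unfolding Pd_eq_sum_Pd_term by (rule member_le_sum) (auto intro: Pd_term_nonneg)
  finally show ?thesis .
qed

lemma Pd_Suc_split_last: "Pd (Suc d) x = (\<Sum>i=0..d. Pd_term (Suc d) x i) + Pd_term (Suc d) x (Suc d)"
  unfolding Pd_eq_sum_Pd_term by (rule sum.atLeast0_atMost_Suc)

lemma Pd_Suc_split_first: "Pd (Suc d) x = Pd_term (Suc d) x 0 + (\<Sum>i=0..d. Pd_term (Suc d) x (Suc i))"
  unfolding Pd_eq_sum_Pd_term by (simp add: sum.atLeast0_atMost_Suc_shift del: sum.cl_ivl_Suc)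

lemma sum_sq_div_le:
  fixes a b p q :: real
  assumes "0 < p" "0 < q"
  shows "(a + b)^2 / (p + q) \<le> a^2 / p + b^2 / q"
proof -
  have "(a^2 * q + b^2 * p) * (p + q) - (a + b)^2 * (p * q) = (a * q - b * p)^2"
    by (simp add: power2_eq_square algebra_simps)
  then have "(a + b)^2 * (p * q) \<le> (a^2 * q + b^2 * p) * (p + q)"
    by (metis diff_ge_0_iff_ge zero_le_power2)
  with assms show ?thesis
    by (simp add: field_simps)
qed

lemma Pd_Suc_lower_bound: "(2 * x - real d)^2 / (2 * (real d + 2)) * Pd d x \<le> Pd (Suc d) x"
proof -
  let ?c = "(2 * x - real d)^2 / (real d + 2)"
  have term_le: "?c * Pd_term d x i \<le> Pd_term (Suc d) x i + Pd_term (Suc d) x (Suc i)"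
    if i: "i \<le> d" for i
  proof -
    have "?c \<le> (x - real (d - i))^2 / real (Suc d - i) + (x - real i)^2 / real (Suc i)"
      using sum_sq_div_le[of "real (Suc d - i)" "real (Suc i)" "x - real (d - i)" "x - real i"] i
      by (simp add: of_nat_diff algebra_simps)
    then have "?c * Pd_term d x i
        \<le> ((x - real (d - i))^2 / real (Suc d - i) + (x - real i)^2 / real (Suc i)) * Pd_term d x i"
      by (rule mult_right_mono) (rule Pd_term_nonneg)
    also have "\<dots> = Pd_term (Suc d) x i + Pd_term (Suc d) x (Suc i)"
      by (simp add: Pd_term_Suc_left[OF i] Pd_term_Suc_right add_divide_distrib algebra_simps)
    finally show ?thesis .
  qed
  have "?c * Pd d x \<le> (\<Sum>i=0..d. Pd_term (Suc d) x i) + (\<Sum>i=0..d. Pd_term (Suc d) x (Suc i))"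
    unfolding Pd_eq_sum_Pd_term sum_distrib_left sum.distrib[symmetric]
    by (intro sum_mono term_le) simp
  also have "\<dots> \<le> 2 * Pd (Suc d) x"
    using Pd_Suc_split_last[of d x] Pd_Suc_split_first[of d x]
      Pd_term_nonneg[of "Suc d" x 0] Pd_term_nonneg[of "Suc d" x "Suc d"] by linarith
  finally show ?thesis
    by (simp add: field_simps)
qed

lemma scaled_square_div_le:
  fixes t b c p e :: real
  assumes "0 \<le> t" "t = 0 \<or> 0 \<le> b \<and> b \<le> c" "0 < e" "e \<le> p"
  shows "t * b^2 / p \<le> t * (c^2 / e)"
proof (cases "t = 0")
  case False
  with assms have "b^2 \<le> c^2"
    by (simp add: power_mono)
  with assms have "b^2 / p \<le> c^2 / e"
    by (intro frac_le) auto
  with assms(1) show ?thesis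
    by (metis mult_left_mono times_divide_eq_right)
qed simp

lemma Pd_Suc_upper_bound:
  "Pd (Suc d) (real n) \<le> (2 * real n - real d + 1)^2 / (real d + 1) * Pd d (real n)"
proof -
  define x where "x = real n"
  define c where "c = (2 * x - real d + 1) / 2"
  define e where "e = (real d + 1) / 2"
  define u where "u j = (if j \<le> d then Pd_term d x j else 0)" for j
  define v where "v j = (if 1 \<le> j then Pd_term d x (j - 1) else 0)" for j
  \<comment> \<open>Terms with \<open>2j \<le> d + 1\<close> are compared with \<open>u j\<close>, the others with \<open>v j\<close>.\<close>
  have "0 < e"
    by (simp add: e_def)
  have uv_nonneg: "0 \<le> u j" "0 \<le> v j" for j
    by (simp_all add: u_def v_def Pd_term_nonneg)
  have term_le: "Pd_term (Suc d) x j \<le> (c^2 / e) * (u j + v j)" if "j \<le> Suc d" for j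
  proof (cases "2 * j \<le> d + 1")
    case True
    then have "j \<le> d"
      by linarith
    have "Pd_term d x j = 0 \<or> 0 \<le> x - real (d - j) \<and> x - real (d - j) \<le> c"
      using True \<open>j \<le> d\<close> Pd_term_def ffall_of_nat_eq_0[of n "d - j"]
      by (auto simp: x_def c_def of_nat_diff)
    then have "Pd_term (Suc d) x j \<le> Pd_term d x j * (c^2 / e)"
      unfolding Pd_term_Suc_left[OF \<open>j \<le> d\<close>]
      by (rule scaled_square_div_le[OF Pd_term_nonneg _ \<open>0 < e\<close>])
        (use True \<open>j \<le> d\<close> in \<open>simp add: e_def of_nat_diff\<close>)
    also have "\<dots> = (c^2 / e) * u j"
      using \<open>j \<le> d\<close> by (simp add: u_def)
    also have "\<dots> \<le> (c^2 / e) * (u j + v j)"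
      using \<open>0 < e\<close> uv_nonneg by (intro mult_left_mono) auto
    finally show ?thesis .
  next
    case False
    then obtain i where j: "j = Suc i" and "i \<le> d" "d \<le> 2 * i"
      using \<open>j \<le> Suc d\<close> by (cases j) auto
    have "Pd_term d x i = 0 \<or> 0 \<le> x - real i \<and> x - real i \<le> c"
      using \<open>d \<le> 2 * i\<close> Pd_term_def ffall_of_nat_eq_0[of n i]
      by (auto simp: x_def c_def)
    then have "Pd_term (Suc d) x j \<le> Pd_term d x i * (c^2 / e)"
      unfolding j Pd_term_Suc_right
      by (rule scaled_square_div_le[OF Pd_term_nonneg _ \<open>0 < e\<close>])
        (use \<open>d \<le> 2 * i\<close> in \<open>simp add: e_def\<close>)
    also have "\<dots> = (c^2 / e) * v j"
      by (simp add: v_def j)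
    also have "\<dots> \<le> (c^2 / e) * (u j + v j)"
      using \<open>0 < e\<close> uv_nonneg by (intro mult_left_mono) auto
    finally show ?thesis .
  qed
  have "(\<Sum>j=0..Suc d. u j) = Pd d x"
    by (simp add: Pd_eq_sum_Pd_term u_def)
  moreover have "(\<Sum>j=0..Suc d. v j) = Pd d x"
    by (simp add: Pd_eq_sum_Pd_term v_def sum.atLeast0_atMost_Suc_shift del: sum.cl_ivl_Suc)
  ultimately have "(\<Sum>j=0..Suc d. (c^2 / e) * (u j + v j)) = (c^2 / e) * (2 * Pd d x)"
    by (simp only: sum_distrib_left[symmetric] sum.distrib) simp
  moreover have "Pd (Suc d) x \<le> (\<Sum>j=0..Suc d. (c^2 / e) * (u j + v j))"
    unfolding Pd_eq_sum_Pd_term by (intro sum_mono term_le) simp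
  ultimately show ?thesis
    by (simp add: x_def c_def e_def field_simps power2_eq_square)
qed

section \<open>The inner sum of \<open>f\<close> as a value of \<open>P\<^sub>d\<close>\<close>

lemma ibinom_of_nat: "ibinom (int a) (int b) = int (a choose b)"
  by (simp add: ibinom_def)

lemma ibinom_nonneg: "0 \<le> ibinom a b"
  by (simp add: ibinom_def)

lemma ibinom_absorption:
  assumes "1 \<le> k"
  shows "ibinom a k * k = ibinom a (k - 1) * (a - k + 1)"
proof (cases "0 \<le> a")
  case True
  obtain m where a: "a = int m"
    using True nonneg_int_cases by blast
  define j where "j = nat (k - 1)"
  have k: "k = int (Suc j)"
    using assms by (simp add: j_def)
  have "ibinom a k * k = int ((m choose Suc j) * Suc j)"
    unfolding a k ibinom_of_nat of_nat_mult ..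
  also have "(m choose Suc j) * Suc j = (m choose j) * (m - j)"
    using binomial_absorption[of j m] binomial_absorb_comp[of m j] by (simp add: ac_simps)
  also have "int ((m choose j) * (m - j)) = ibinom a (k - 1) * (a - k + 1)"
  proof -
    have "k - 1 = int j" "a - k + 1 = int m - int j"
      by (simp_all add: a k)
    then show ?thesis
      by (cases "j \<le> m") (simp_all add: a ibinom_of_nat of_nat_diff)
  qed
  finally show ?thesis .
qed (simp add: ibinom_def)

lemma binom_product_eq_Pd_term:
  fixes n N k :: nat
  assumes "k \<le> n" "N \<le> 2 * n"
  shows "real_of_int (ibinom (int n) (int k) * ibinom (int n) (int N - int k) * ibinom (int N) (int k))
           * fact n ^ 2
         = fact N * (if n - k \<le> 2 * n - N then Pd_term (2 * n - N) (real n) (n - k) else 0)"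
proof -
  consider (inside) "k \<le> N" "N - k \<le> n" | (small) "N < k" | (large) "n < N - k"
    by linarith
  then show ?thesis
  proof cases
    case inside
    have diff: "int N - int k = int (N - k)" "2 * n - N - (n - k) = n - (N - k)"
      using inside assms by auto
    have "real_of_int (ibinom (int n) (int k) * ibinom (int n) (int N - int k) * ibinom (int N) (int k))
        = real (n choose k) * real (n choose (N - k)) * real (N choose k)"
      by (simp add: diff ibinom_of_nat)
    also have "\<dots> = fact n / (fact k * fact (n - k)) * (fact n / (fact (N - k) * fact (n - (N - k))))
          * (fact N / (fact k * fact (N - k)))"
      using inside assms by (simp add: binomial_fact)
    finally have lhs: "real_of_int (ibinom (int n) (int k) * ibinom (int n) (int N - int k) * ibinom (int N) (int k))
        = \<dots>" .
    have "ffall (real n) (n - k) = fact n / fact k"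
      "ffall (real n) (n - (N - k)) = fact n / fact (N - k)"
      using inside assms ffall_of_nat[of "n - k" n] ffall_of_nat[of "n - (N - k)" n] by simp_all
    then have rhs: "Pd_term (2 * n - N) (real n) (n - k)
        = (fact n / fact k)^2 * (fact n / fact (N - k))^2 / (fact (n - k) * fact (n - (N - k)))"
      unfolding Pd_term_def diff(2) by simp
    have "n - k \<le> 2 * n - N"
      using inside by linarith
    then show ?thesis
      unfolding lhs rhs by (simp add: field_simps power2_eq_square)
  next
    case small
    then have "ibinom (int N) (int k) = 0"
      by (simp add: ibinom_def)
    moreover have "Pd_term (2 * n - N) (real n) (n - k) = 0" if "n - k \<le> 2 * n - N"
      using small assms that by (simp add: Pd_term_def ffall_of_nat_eq_0)
    ultimately show ?thesis
      by simp
  next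
    case large
    then have "ibinom (int n) (int N - int k) = 0" "\<not> n - k \<le> 2 * n - N"
      using assms by (auto simp: ibinom_def)
    then show ?thesis
      by simp
  qed
qed

lemma binom_sum_eq_Pd:
  fixes n N :: nat
  assumes "N \<le> 2 * n"
  shows "real_of_int (\<Sum>i\<in>{0..int n}. ibinom (int n) i * ibinom (int n) (int N - i) * ibinom (int N) i)
           * fact n ^ 2
         = fact N * Pd (2 * n - N) (real n)"
proof -
  define d where "d = 2 * n - N"
  define h where "h i = (if i \<le> d then Pd_term d (real n) i else 0)" for i
  have "Pd d (real n) = (\<Sum>i=0..d + n. h i)"
    unfolding Pd_eq_sum_Pd_term h_def by (rule sum.mono_neutral_cong_left) auto
  also have "\<dots> = (\<Sum>i=0..n. h i)"
    by (rule sum.mono_neutral_right) (auto simp: h_def Pd_term_def ffall_of_nat_eq_0)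
  also have "\<dots> = (\<Sum>k=0..n. h (n - k))"
    by (subst sum.atLeastAtMost_rev) simp
  finally have Pd_rev: "Pd d (real n) = (\<Sum>k=0..n. h (n - k))" .
  have "{0..int n} = int ` {0..n}"
    by (simp add: image_int_atLeastAtMost)
  then have "real_of_int (\<Sum>i\<in>{0..int n}. ibinom (int n) i * ibinom (int n) (int N - i) * ibinom (int N) i)
             * fact n ^ 2
      = (\<Sum>k=0..n. real_of_int (ibinom (int n) (int k) * ibinom (int n) (int N - int k) * ibinom (int N) (int k))
             * fact n ^ 2)"
    by (simp add: sum.reindex sum_distrib_right)
  also have "\<dots> = (\<Sum>k=0..n. fact N * h (n - k))"
    by (rule sum.cong) (use binom_product_eq_Pd_term assms in \<open>auto simp: h_def d_def\<close>)
  also have "\<dots> = fact N * Pd d (real n)"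
    by (simp add: Pd_rev sum_distrib_left)
  finally show ?thesis
    by (simp add: d_def)
qed

lemma fs_nonneg: "0 \<le> fs s1 s2 N"
  unfolding fs_def by (intro mult_nonneg_nonneg sum_nonneg ibinom_nonneg)

lemma fs_eq_0_of_neg: "N < 0 \<Longrightarrow> fs s1 s2 N = 0"
  by (simp add: fs_def ibinom_def)

lemma fs_eq_0_of_gt: "2 * s1 < N \<Longrightarrow> fs s1 s2 N = 0"
  unfolding fs_def by (subst sum.neutral) (auto simp: ibinom_def)

lemma fs_consecutive:
  fixes n k :: nat and s2 :: int
  assumes "1 \<le> k" "k \<le> 2 * n"
  obtains c :: real where "0 \<le> c"
    and "real_of_int (fs (int n) s2 (int k)) = c * ((real_of_int s2 - real k + 1) * Pd (2 * n - k) (real n))"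
    and "real_of_int (fs (int n) s2 (int k - 1)) = c * Pd (Suc (2 * n - k)) (real n)"
proof
  define G where "G N = (\<Sum>i\<in>{0..int n}. ibinom (int n) i * ibinom (int n) (int N - i) * ibinom (int N) i)"
    for N :: nat
  have fs_G: "fs (int n) s2 (int N) = ibinom s2 (int N) * G N" for N
    by (simp add: fs_def G_def)
  have G_Pd: "real_of_int (G N) = fact N * Pd (2 * n - N) (real n) / fact n ^ 2" if "N \<le> 2 * n" for N
    using binom_sum_eq_Pd[OF that] by (simp add: G_def eq_divide_eq)
  have absorb: "real_of_int (ibinom s2 (int k)) * real k
      = real_of_int (ibinom s2 (int k - 1)) * (real_of_int s2 - real k + 1)"
  proof -
    have "ibinom s2 (int k) * int k = ibinom s2 (int k - 1) * (s2 - int k + 1)"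
      using assms by (intro ibinom_absorption) simp
    then have "real_of_int (ibinom s2 (int k) * int k) = real_of_int (ibinom s2 (int k - 1) * (s2 - int k + 1))"
      by (rule arg_cong)
    then show ?thesis
      by simp
  qed
  have k: "int k - 1 = int (k - 1)" "Suc (2 * n - k) = 2 * n - (k - 1)" "fact k = real k * fact (k - 1)"
    using assms by (simp_all add: fact_reduce)
  define c where "c = real_of_int (ibinom s2 (int k - 1)) * fact (k - 1) / fact n ^ 2"
  show "0 \<le> c"
    by (simp add: c_def ibinom_nonneg)
  have "real_of_int (fs (int n) s2 (int k)) * real k
      = real_of_int (ibinom s2 (int k)) * real k * fact k * Pd (2 * n - k) (real n) / fact n ^ 2"
    using assms by (simp add: fs_G G_Pd)
  also have "\<dots> = c * ((real_of_int s2 - real k + 1) * Pd (2 * n - k) (real n)) * real k"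
    unfolding absorb c_def k(3) by simp
  finally show "real_of_int (fs (int n) s2 (int k)) = c * ((real_of_int s2 - real k + 1) * Pd (2 * n - k) (real n))"
    using assms by simp
  have "real_of_int (fs (int n) s2 (int k - 1))
      = real_of_int (ibinom s2 (int k - 1)) * (fact (k - 1) * Pd (Suc (2 * n - k)) (real n) / fact n ^ 2)"
    using assms unfolding k(1,2) fs_G by (simp add: G_Pd)
  then show "real_of_int (fs (int n) s2 (int k - 1)) = c * Pd (Suc (2 * n - k)) (real n)"
    by (simp add: c_def)
qed

lemma fs_pred_le_fs:
  fixes n k :: nat and s2 :: int
  assumes "1 \<le> k" "k \<le> 2 * n"
    and "Pd (Suc (2 * n - k)) (real n) \<le> (real_of_int s2 - real k + 1) * Pd (2 * n - k) (real n)"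
  shows "fs (int n) s2 (int k - 1) \<le> fs (int n) s2 (int k)"
proof -
  obtain c where "0 \<le> c"
    and "real_of_int (fs (int n) s2 (int k)) = c * ((real_of_int s2 - real k + 1) * Pd (2 * n - k) (real n))"
    and "real_of_int (fs (int n) s2 (int k - 1)) = c * Pd (Suc (2 * n - k)) (real n)"
    using fs_consecutive[OF assms(1,2)] .
  with assms(3) have "real_of_int (fs (int n) s2 (int k - 1)) \<le> real_of_int (fs (int n) s2 (int k))"
    by (simp add: mult_left_mono)
  then show ?thesis
    by linarith
qed

lemma fs_le_fs_pred:
  fixes n k :: nat and s2 :: int
  assumes "1 \<le> k" "k \<le> 2 * n"
    and "(real_of_int s2 - real k + 1) * Pd (2 * n - k) (real n) \<le> Pd (Suc (2 * n - k)) (real n)"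
  shows "fs (int n) s2 (int k) \<le> fs (int n) s2 (int k - 1)"
proof -
  obtain c where "0 \<le> c"
    and "real_of_int (fs (int n) s2 (int k)) = c * ((real_of_int s2 - real k + 1) * Pd (2 * n - k) (real n))"
    and "real_of_int (fs (int n) s2 (int k - 1)) = c * Pd (Suc (2 * n - k)) (real n)"
    using fs_consecutive[OF assms(1,2)] .
  with assms(3) have "real_of_int (fs (int n) s2 (int k)) \<le> real_of_int (fs (int n) s2 (int k - 1))"
    by (simp add: mult_left_mono)
  then show ?thesis
    by linarith
qed

section \<open>The gap between the two recursion factors\<close>

text \<open>\<open>gap e x y\<close> is \<open>q\<^sub>e(x) - (y - 2x + e + 1)\<close>, where \<open>q\<^sub>e\<close> is the quadratic factor in \<open>R\<^sub>e\<close>;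
  \<open>gap_root x y\<close> is the nonnegative root in \<open>e\<close> of its numerator.\<close>

definition gap :: "real \<Rightarrow> real \<Rightarrow> real \<Rightarrow> real" where
  "gap e x y = 2 / (e + 1) * (x^2 + x) - (e + 2) / 2 - y"

definition gap_root :: "real \<Rightarrow> real \<Rightarrow> real" where
  "gap_root x y = sqrt (4 * x^2 + 4 * x + (y + 1/2)^2) - y - 3/2"

lemma gap_eq: "e \<noteq> -1 \<Longrightarrow> gap e x y = (4 * (x^2 + x) - (e + 1) * (e + 2 + 2 * y)) / (2 * (e + 1))"
  by (simp add: gap_def field_simps)

lemma gap_antimono:
  assumes "0 \<le> x" "0 \<le> e" "e \<le> e'"
  shows "gap e' x y \<le> gap e x y"
proof -
  have "2 / (e' + 1) * (x^2 + x) \<le> 2 / (e + 1) * (x^2 + x)"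
    using assms by (intro mult_right_mono divide_left_mono) auto
  moreover have "(e + 2) / 2 \<le> (e' + 2) / 2"
    using assms by simp
  ultimately show ?thesis
    unfolding gap_def by linarith
qed

lemma gap_factor:
  assumes "0 \<le> x" "0 \<le> y" "0 \<le> e"
  shows "4 * (x^2 + x) - (e + 1) * (e + 2 + 2 * y)
           = (gap_root x y - e) * (gap_root x y + e + 3 + 2 * y)"
    and "0 < gap_root x y + e + 3 + 2 * y"
proof -
  define S where "S = sqrt (4 * x^2 + 4 * x + (y + 1/2)^2)"
  have "S^2 = 4 * x^2 + 4 * x + (y + 1/2)^2" "0 \<le> S"
    using assms by (simp_all add: S_def)
  then show "4 * (x^2 + x) - (e + 1) * (e + 2 + 2 * y)
           = (gap_root x y - e) * (gap_root x y + e + 3 + 2 * y)"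
      "0 < gap_root x y + e + 3 + 2 * y"
    using assms by (simp_all add: gap_root_def flip: S_def) (simp add: power2_eq_square algebra_simps)
qed

lemma gap_pos_iff:
  assumes "0 \<le> x" "0 \<le> y" "0 \<le> e"
  shows "0 < gap e x y \<longleftrightarrow> e < gap_root x y"
  using gap_factor[OF assms] assms
  by (simp add: gap_eq zero_less_mult_iff zero_less_divide_iff)

lemma gap_neg_iff:
  assumes "0 \<le> x" "0 \<le> y" "0 \<le> e"
  shows "gap e x y < 0 \<longleftrightarrow> gap_root x y < e"
  using gap_factor[OF assms] assms
  by (simp add: gap_eq mult_less_0_iff divide_less_0_iff)

lemma gap_double_neg:
  assumes "0 \<le> x" "0 \<le> y"
  shows "gap (2 * x) x y < 0"
proof -
  have "2 * x \<noteq> -1"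
    using assms by simp
  with assms show ?thesis
    by (simp add: gap_eq divide_less_0_iff algebra_simps power2_eq_square)
      (smt (verit) mult_nonneg_nonneg)
qed

lemma Rd_factor_eq_gap:
  assumes "e \<noteq> -1"
  shows "2 / (e + 1) * x^2 - 2 * e / (e + 1) * x + e / 2 = gap e x y + (y - 2 * x + e + 1)"
proof -
  have "2 / (e + 1) * x - 2 * x = - (2 * e / (e + 1) * x)"
    using assms by (simp add: field_simps)
  then show ?thesis
    by (simp add: gap_def algebra_simps add_divide_distrib)
qed

lemma Rd_eq_gap: "Rd d x = Pd (Suc d) x - (gap (real d) x y + (y - 2 * x + real d + 1)) * Pd d x"
proof -
  have "real d \<noteq> -1"
    by simp
  then show ?thesis
    unfolding Rd_def Rd_factor_eq_gap[OF \<open>real d \<noteq> -1\<close>, of x y] by simp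
qed

lemma Pd_Suc_le_of_gap_le:
  assumes "0 < Pd d x" "gap (real d) x y \<le> - Rd d x / Pd d x"
  shows "Pd (Suc d) x \<le> (y - 2 * x + real d + 1) * Pd d x"
proof -
  have "gap (real d) x y * Pd d x \<le> - Rd d x"
    using assms pos_le_divide_eq[OF assms(1), of _ "- Rd d x"] by simp
  then show ?thesis
    by (simp add: Rd_eq_gap[of d x y] algebra_simps)
qed

lemma Pd_Suc_ge_of_gap_nonneg:
  assumes "0 \<le> gap (real d + 1) x y" "real d \<le> 2 * x"
  shows "(y - 2 * x + real d + 1) * Pd d x \<le> Pd (Suc d) x"
proof -
  let ?e = "real d"
  have "0 \<le> 4 * (x^2 + x) - (?e + 2) * (?e + 3 + 2 * y)"
    using assms(1) by (simp add: gap_eq zero_le_divide_iff algebra_simps)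
  moreover have "(2 * x - ?e)^2 - (y - 2 * x + ?e + 1) * (2 * (?e + 2))
      = 4 * (x^2 + x) - (?e + 2) * (?e + 3 + 2 * y) + (4 * x - ?e + 2)"
    by (simp add: algebra_simps power2_eq_square)
  ultimately have "y - 2 * x + ?e + 1 \<le> (2 * x - ?e)^2 / (2 * (?e + 2))"
    using assms(2) by (simp add: pos_le_divide_eq)
  then have "(y - 2 * x + ?e + 1) * Pd d x \<le> (2 * x - ?e)^2 / (2 * (?e + 2)) * Pd d x"
    by (rule mult_right_mono) (rule Pd_nonneg)
  also have "\<dots> \<le> Pd (Suc d) x"
    by (rule Pd_Suc_lower_bound)
  finally show ?thesis .
qed

lemma sq_Suc_le_of_small:
  fixes N d s :: int
  assumes "1 \<le> N" "N^2 < d + 2" "5 \<le> d" "0 \<le> s" "N + d + 3 \<le> s^2 + s"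
  shows "(N + 1)^2 \<le> (d + 1) * (s - N + 1)"
proof -
  have "N + 1 \<le> s"
  proof (rule ccontr)
    assume "\<not> N + 1 \<le> s"
    then have "s^2 + s \<le> N^2 + N"
      using assms(4) by (simp add: add_mono power_mono)
    then show False
      using assms by linarith
  qed
  have "2 * N \<le> d"
  proof (cases "N \<le> 2")
    case False
    then have "3 * N \<le> N^2"
      by (simp add: power2_eq_square)
    then show ?thesis
      using assms by linarith
  qed (use assms in linarith)
  then have "(N + 1)^2 \<le> 2 * (d + 1)"
    using assms by (simp add: power2_eq_square algebra_simps)
  also have "\<dots> \<le> (d + 1) * (s - N + 1)"
    using mult_left_mono[of 2 "s - N + 1" "d + 1"] \<open>N + 1 \<le> s\<close> assms by (simp add: mult.commute)
  finally show ?thesis .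
qed

definition conjecture_3_1 :: bool where
  "conjecture_3_1 \<longleftrightarrow> (\<forall>(d::nat) (x::real). d \<ge> 5 \<and> x \<ge> (real d + sqrt (real d + 2)) / 2 \<longrightarrow>
     - Rd d x / Pd d x \<ge> 0.995 * (real d - 2) / (2 * x + real d - 2))"

lemma Pd_Suc_le_of_conjecture:
  fixes n d :: nat and s2 :: int
  assumes conjecture_3_1 "5 \<le> d" "d < 2 * n" "0 \<le> s2" "2 * int n + 3 \<le> s2^2 + s2"
    and "gap (real d) (real n) (real_of_int s2) \<le> 0.995 * (real d - 2) / (2 * real n + real d - 2)"
  shows "Pd (Suc d) (real n) \<le> (real_of_int s2 - 2 * real n + real d + 1) * Pd d (real n)"
proof (cases "(real d + sqrt (real d + 2)) / 2 \<le> real n")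
  case True
  with assms have "gap (real d) (real n) (real_of_int s2) \<le> - Rd d (real n) / Pd d (real n)"
    unfolding conjecture_3_1_def by (meson order.trans)
  then show ?thesis
    using assms by (intro Pd_Suc_le_of_gap_le Pd_pos) auto
next
  case False
  \<comment> \<open>Outside the range of the conjecture \<open>N = 2n - d\<close> is below \<open>sqrt (d + 2)\<close>.\<close>
  define N where "N = 2 * n - d"
  have N: "real N = 2 * real n - real d" "1 \<le> N"
    using assms by (simp_all add: N_def of_nat_diff)
  with False have "real N < sqrt (real d + 2)"
    by simp
  then have "real N ^ 2 < real d + 2"
    using real_sqrt_less_iff[of "real N ^ 2" "real d + 2"] by simp
  then have "int N ^ 2 < int d + 2"
    by (simp flip: of_nat_power)
  then have "(int N + 1)^2 \<le> (int d + 1) * (s2 - int N + 1)"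
    using assms N by (intro sq_Suc_le_of_small) (simp_all add: N_def)
  then have "real_of_int ((int N + 1)^2) \<le> real_of_int ((int d + 1) * (s2 - int N + 1))"
    by (simp only: of_int_le_iff)
  then have "(real N + 1)^2 \<le> (real d + 1) * (real_of_int s2 - real N + 1)"
    by simp
  then have "(2 * real n - real d + 1)^2 \<le> (real_of_int s2 - 2 * real n + real d + 1) * (real d + 1)"
    unfolding N(1) by (simp add: algebra_simps)
  then have "(2 * real n - real d + 1)^2 / (real d + 1) \<le> real_of_int s2 - 2 * real n + real d + 1"
    by (subst pos_divide_le_eq) simp_all
  then have "(2 * real n - real d + 1)^2 / (real d + 1) * Pd d (real n)
      \<le> (real_of_int s2 - 2 * real n + real d + 1) * Pd d (real n)"
    by (rule mult_right_mono) (rule Pd_nonneg)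
  with Pd_Suc_upper_bound show ?thesis
    by (rule order.trans)
qed

section \<open>Unimodality of \<open>f\<close>\<close>

lemma int_unimodal_max:
  fixes f :: "int \<Rightarrow> 'a::preorder"
  assumes up: "\<And>N. N \<le> N0 \<Longrightarrow> f (N - 1) \<le> f N"
    and down: "\<And>N. N0 < N \<Longrightarrow> f N \<le> f (N - 1)"
  shows "f M \<le> f N0"
proof (cases "M \<le> N0")
  case True
  then show ?thesis
  proof (induction M rule: int_le_induct)
    case (step i)
    then show ?case
      using up by (meson order.trans)
  qed simp
next
  case False
  then have "N0 \<le> M"
    by simp
  then show ?thesis
  proof (induction M rule: int_ge_induct[consumes 1])
    case (step i)
    then have "f (i + 1) \<le> f i"
      using down[of "i + 1"] by simp
    then show ?case
      using step.IH by (rule order.trans)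
  qed simp
qed

lemma fs_pred_le_fs_below_peak:
  fixes n d0 :: nat and s2 N :: int
  assumes conjecture_3_1 and "5 \<le> d0" "0 \<le> s2" "2 * int n + 3 \<le> s2^2 + s2"
    and gap_d0: "gap (real d0) (real n) (real_of_int s2) \<le> 0.995 * (real d0 - 2) / (2 * real n + real d0 - 2)"
    and gap_beyond: "\<And>d::nat. d0 < d \<Longrightarrow> gap (real d) (real n) (real_of_int s2) < 0"
    and "N + int d0 \<le> 2 * int n"
  shows "fs (int n) s2 (N - 1) \<le> fs (int n) s2 N"
proof (cases "1 \<le> N")
  case True
  define k where "k = nat N"
  have k: "N = int k" "1 \<le> k"
    using True by (simp_all add: k_def)
  define d where "d = 2 * n - k"
  have d: "d0 \<le> d" "d < 2 * n" "k \<le> 2 * n" "real d = 2 * real n - real k"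
    using assms k by (auto simp: d_def of_nat_diff)
  have "gap (real d) (real n) (real_of_int s2) \<le> 0.995 * (real d - 2) / (2 * real n + real d - 2)"
  proof (cases "d = d0")
    case False
    then have "gap (real d) (real n) (real_of_int s2) < 0"
      using d by (intro gap_beyond) simp
    moreover have "0 \<le> 0.995 * (real d - 2) / (2 * real n + real d - 2)"
      using d \<open>5 \<le> d0\<close> by simp
    ultimately show ?thesis
      by linarith
  qed (use gap_d0 in simp)
  then have "Pd (Suc d) (real n) \<le> (real_of_int s2 - 2 * real n + real d + 1) * Pd d (real n)"
    using assms d by (intro Pd_Suc_le_of_conjecture) simp_all
  then show ?thesis
    using fs_pred_le_fs[of k n s2] k d by (simp add: d_def)
next
  case False
  then show ?thesis
    using fs_eq_0_of_neg[of "N - 1"] fs_nonneg by simp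
qed

lemma fs_le_fs_pred_above_peak:
  fixes n d0 :: nat and s2 N :: int
  assumes "0 \<le> s2" "0 < gap (real d0) (real n) (real_of_int s2)" "2 * int n < N + int d0"
  shows "fs (int n) s2 N \<le> fs (int n) s2 (N - 1)"
proof (cases "N \<le> 2 * int n")
  case True
  have "d0 < 2 * n"
  proof (rule ccontr)
    assume "\<not> d0 < 2 * n"
    then have "gap (real d0) (real n) (real_of_int s2) \<le> gap (2 * real n) (real n) (real_of_int s2)"
      by (intro gap_antimono) auto
    with assms gap_double_neg[of "real n" "real_of_int s2"] show False
      by simp
  qed
  define k where "k = nat N"
  have k: "N = int k" "1 \<le> k"
    using assms \<open>d0 < 2 * n\<close> by (simp_all add: k_def)
  define d where "d = 2 * n - k"
  have d: "d + 1 \<le> d0" "k \<le> 2 * n" "real d = 2 * real n - real k"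
    using assms True k by (auto simp: d_def of_nat_diff)
  then have "gap (real d0) (real n) (real_of_int s2) \<le> gap (real d + 1) (real n) (real_of_int s2)"
    by (intro gap_antimono) auto
  then have "(real_of_int s2 - 2 * real n + real d + 1) * Pd d (real n) \<le> Pd (Suc d) (real n)"
    using assms d by (intro Pd_Suc_ge_of_gap_nonneg) simp_all
  then show ?thesis
    using fs_le_fs_pred[of k n s2] k d by (simp add: d_def)
next
  case False
  then show ?thesis
    using fs_eq_0_of_gt[of "int n" N] fs_nonneg by simp
qed

lemma fs_le_fs_peak:
  fixes n d0 :: nat and s2 M :: int
  assumes conjecture_3_1 and "5 \<le> d0" "0 \<le> s2" "2 * int n + 3 \<le> s2^2 + s2"
    and "0 < gap (real d0) (real n) (real_of_int s2)"
    and "gap (real d0) (real n) (real_of_int s2) \<le> 0.995 * (real d0 - 2) / (2 * real n + real d0 - 2)"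
    and root: "gap_root (real n) (real_of_int s2) < real d0 + 1"
  shows "fs (int n) s2 M \<le> fs (int n) s2 (2 * int n - int d0)"
proof (rule int_unimodal_max[where f = "fs (int n) s2"])
  have "gap (real d) (real n) (real_of_int s2) < 0" if "d0 < d" for d :: nat
    using that root assms by (subst gap_neg_iff) auto
  then show "fs (int n) s2 (N - 1) \<le> fs (int n) s2 N" if "N \<le> 2 * int n - int d0" for N
    using that assms by (intro fs_pred_le_fs_below_peak[of d0 s2]) auto
  show "fs (int n) s2 N \<le> fs (int n) s2 (N - 1)" if "2 * int n - int d0 < N" for N
    using that assms by (intro fs_le_fs_pred_above_peak) auto
qed

lemma sq_add_ge_of_gt_sqrt:
  fixes s1 s2 :: int
  assumes "0 \<le> s1" "(sqrt (8 * real_of_int s1 + 9) - 1) / 2 < real_of_int s2"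
  shows "0 \<le> s2" "2 * s1 + 3 \<le> s2^2 + s2"
proof -
  have "3 \<le> sqrt (8 * real_of_int s1 + 9)"
    using assms(1) by (intro real_le_rsqrt) simp
  with assms(2) have "0 \<le> real_of_int s2"
    by (simp add: field_simps)
  then show "0 \<le> s2"
    by simp
  have "8 * real_of_int s1 + 9 = sqrt (8 * real_of_int s1 + 9) ^ 2"
    using assms(1) by simp
  also have "\<dots> < (2 * real_of_int s2 + 1) ^ 2"
    using assms \<open>3 \<le> sqrt _\<close> by (intro power_strict_mono) auto
  finally have "real_of_int (8 * s1 + 9) < real_of_int ((2 * s2 + 1)^2)"
    by simp
  then have "8 * s1 + 9 < (2 * s2 + 1)^2"
    by (simp only: of_int_less_iff)
  then show "2 * s1 + 3 \<le> s2^2 + s2"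
    by (simp add: power2_eq_square algebra_simps)
qed

theorem theorem3p2:
  fixes s1 s2 :: int
  assumes conj: "\<forall>(d::nat) (x::real). d \<ge> 5 \<and> x \<ge> (real d + sqrt (real d + 2)) / 2 \<longrightarrow>
                   - Rd d x / Pd d x \<ge> 0.995 * (real d - 2) / (2 * x + real d - 2)"
    and s1: "s1 \<ge> 1"
    and s2: "real_of_int s2 > (sqrt (8 * real_of_int s1 + 9) - 1) / 2"
    and d0_ge: "\<lfloor>sqrt (4 * real_of_int s1 ^ 2 + 4 * real_of_int s1 + (real_of_int s2 + 1/2)^2)
                  - real_of_int s2 - 3/2\<rfloor> \<ge> 5"
    and pos: "0 < 2 / (real_of_int \<lfloor>sqrt (4 * real_of_int s1 ^ 2 + 4 * real_of_int s1 + (real_of_int s2 + 1/2)^2)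
                  - real_of_int s2 - 3/2\<rfloor> + 1) * (real_of_int s1 ^ 2 + real_of_int s1)
               - (real_of_int \<lfloor>sqrt (4 * real_of_int s1 ^ 2 + 4 * real_of_int s1 + (real_of_int s2 + 1/2)^2)
                  - real_of_int s2 - 3/2\<rfloor> + 2) / 2 - real_of_int s2"
    and upper: "2 / (real_of_int \<lfloor>sqrt (4 * real_of_int s1 ^ 2 + 4 * real_of_int s1 + (real_of_int s2 + 1/2)^2)
                  - real_of_int s2 - 3/2\<rfloor> + 1) * (real_of_int s1 ^ 2 + real_of_int s1)
               - (real_of_int \<lfloor>sqrt (4 * real_of_int s1 ^ 2 + 4 * real_of_int s1 + (real_of_int s2 + 1/2)^2)
                  - real_of_int s2 - 3/2\<rfloor> + 2) / 2 - real_of_int s2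
             \<le> 0.995 * (real_of_int \<lfloor>sqrt (4 * real_of_int s1 ^ 2 + 4 * real_of_int s1 + (real_of_int s2 + 1/2)^2)
                  - real_of_int s2 - 3/2\<rfloor> - 2)
               / (2 * real_of_int s1 + real_of_int \<lfloor>sqrt (4 * real_of_int s1 ^ 2 + 4 * real_of_int s1 + (real_of_int s2 + 1/2)^2)
                  - real_of_int s2 - 3/2\<rfloor> - 2)"
  shows "\<forall>M::int. fs s1 s2 M \<le> fs s1 s2
           (\<lfloor>2 * real_of_int s1 + real_of_int s2 + 3/2
              - sqrt (4 * real_of_int s1 ^ 2 + 4 * real_of_int s1 + (real_of_int s2 + 1/2)^2)\<rfloor> + 1)"
proof -
  define r where "r = gap_root (real_of_int s1) (real_of_int s2)"
  define n where "n = nat s1"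
  define d0 where "d0 = nat \<lfloor>r\<rfloor>"
  have n: "s1 = int n" "real_of_int s1 = real n"
    using s1 by (simp_all add: n_def)
  have "5 \<le> \<lfloor>r\<rfloor>"
    using d0_ge unfolding r_def gap_root_def .
  then have d0: "\<lfloor>r\<rfloor> = int d0" "5 \<le> d0"
    by (simp_all add: d0_def le_nat_iff)
  have s2_facts: "0 \<le> s2" "2 * int n + 3 \<le> s2^2 + s2"
    using sq_add_ge_of_gt_sqrt[OF _ s2] s1 n by simp_all
  have gap_d0: "0 < gap (real d0) (real n) (real_of_int s2)"
    "gap (real d0) (real n) (real_of_int s2) \<le> 0.995 * (real d0 - 2) / (2 * real n + real d0 - 2)"
    using pos upper d0 n by (simp_all add: gap_def r_def gap_root_def)
  have root: "real d0 < r" "r < real d0 + 1"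
    using gap_d0(1) gap_pos_iff[of "real n" "real_of_int s2" "real d0"] s2_facts
    by (simp add: r_def n) (metis d0(1) of_int_of_nat_eq real_of_int_floor_add_one_gt)
  have "\<lfloor>2 * real_of_int s1 - r\<rfloor> = 2 * int n - int d0 - 1"
    using root by (simp add: floor_eq_iff n)
  then have "\<lfloor>2 * real_of_int s1 + real_of_int s2 + 3/2
          - sqrt (4 * real_of_int s1 ^ 2 + 4 * real_of_int s1 + (real_of_int s2 + 1/2)^2)\<rfloor> + 1
        = 2 * int n - int d0"
    by (simp add: r_def gap_root_def algebra_simps)
  moreover have "fs s1 s2 M \<le> fs s1 s2 (2 * int n - int d0)" for M
    unfolding n(1)
    using conj s2_facts d0 root(2) gap_d0
    by (intro fs_le_fs_peak) (simp_all add: conjecture_3_1_def r_def n(2))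
  ultimately show ?thesis
    by simp
qed

end
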